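(* For every integer $t\geq 2$ there exist a connected graph $G$ and a function $g:A\to B$ such that $fix(G)-fix(F_G)=t$.
   Context: A set $S\subseteq V(H)$ is a fixing set of a graph $H$ if the only automorphism of $H$ fixing every vertex of $S$ is the identity; $fix(H)$ is the minimum cardinality of a fixing set of $H$. Functigraph: let $G_1,G_2$ be disjoint copies of a connected graph $G$, with $A=V(G_1)$, $B=V(G_2)$, and let $g:A\to B$ be a function. The functigraph $F_G$ has vertex set $A\cup B$ and edge set $E(G_1)\cup E(G_2)\cup\{ug(u):u\in A\}$. *)

theory Defs
  imports Main "HOL-Library.FuncSet"
begin

definition simple_graph :: "'a set \<Rightarrow> ('a \<Rightarrow> 'a \<Rightarrow> bool) \<Rightarrow> bool" where
  "simple_graph V E \<longleftrightarrow> finite V \<and> (\<forall>x y. E x y \<longrightarrow> x \<in> V \<and> y \<in> V)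
     \<and> (\<forall>x y. E x y \<longrightarrow> E y x) \<and> (\<forall>x. \<not> E x x)"

definition connected_graph :: "'a set \<Rightarrow> ('a \<Rightarrow> 'a \<Rightarrow> bool) \<Rightarrow> bool" where
  "connected_graph V E \<longleftrightarrow> simple_graph V E \<and> V \<noteq> {}
     \<and> (\<forall>x\<in>V. \<forall>y\<in>V. E\<^sup>*\<^sup>* x y)"

definition automorphism :: "'a set \<Rightarrow> ('a \<Rightarrow> 'a \<Rightarrow> bool) \<Rightarrow> ('a \<Rightarrow> 'a) \<Rightarrow> bool" where
  "automorphism V E \<sigma> \<longleftrightarrow> bij_betw \<sigma> V V \<and> (\<forall>x\<in>V. \<forall>y\<in>V. E x y \<longleftrightarrow> E (\<sigma> x) (\<sigma> y))"

definition fixing_set :: "'a set \<Rightarrow> ('a \<Rightarrow> 'a \<Rightarrow> bool) \<Rightarrow> 'a set \<Rightarrow> bool" where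
  "fixing_set V E S \<longleftrightarrow> S \<subseteq> V \<and>
     (\<forall>\<sigma>. automorphism V E \<sigma> \<and> (\<forall>x\<in>S. \<sigma> x = x) \<longrightarrow> (\<forall>x\<in>V. \<sigma> x = x))"

text \<open>Fixing number: minimum cardinality of a fixing set (V itself is one).\<close>
definition fix_num :: "'a set \<Rightarrow> ('a \<Rightarrow> 'a \<Rightarrow> bool) \<Rightarrow> nat" where
  "fix_num V E = Min (card ` {S. fixing_set V E S})"

text \<open>Functigraph: two disjoint copies Inl ` V (= A) and Inr ` V (= B) of G, plus the
  edges u g(u) for u in A.\<close>
definition functigraph_vertices :: "'a set \<Rightarrow> ('a + 'a) set" where
  "functigraph_vertices V = Inl ` V \<union> Inr ` V"

definition functigraph_edges ::
  "'a set \<Rightarrow> ('a \<Rightarrow> 'a \<Rightarrow> bool) \<Rightarrow> ('a \<Rightarrow> 'a) \<Rightarrow> ('a + 'a) \<Rightarrow> ('a + 'a) \<Rightarrow> bool" where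
  "functigraph_edges V E g x y \<longleftrightarrow>
     (\<exists>a b. x = Inl a \<and> y = Inl b \<and> E a b) \<or>
     (\<exists>a b. x = Inr a \<and> y = Inr b \<and> E a b) \<or>
     (\<exists>u\<in>V. x = Inl u \<and> y = Inr (g u)) \<or>
     (\<exists>u\<in>V. x = Inr (g u) \<and> y = Inl u)"

end

theory Submission
  imports Defs "HOL-Combinatorics.Transposition"
begin

text \<open>Take for \<open>G\<close> the broom: a path \<open>0, 1, \<dots>, m+1\<close> with \<open>m\<close> pendant leaves at \<open>0\<close>. The leaves
  are pairwise twins, so a fixing set contains all but at most one of them, and \<open>m - 1\<close> leaves
  already fix \<open>G\<close>; thus \<open>fix(G) = m - 1\<close>. Let \<open>g\<close> be the involution exchanging the path vertex
  \<open>j\<close> with the leaf \<open>j+m+1\<close> (\<open>1 \<le> j \<le> m\<close>). Then swapping the two copies is an automorphism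
  of \<open>F\<^sub>G\<close>, so \<open>fix(F\<^sub>G) \<ge> 1\<close>, while fixing the end \<open>m+1\<close> of one copy of the path rigidifies
  \<open>F\<^sub>G\<close>: path vertices have degree at least 3 and leaves degree 2, which lets fixedness
  propagate along both paths and then to the leaves. Hence \<open>fix(G) - fix(F\<^sub>G) = m - 2\<close>, and
  \<open>m = t + 2\<close> works for every \<open>t\<close>.\<close>

definition neighbours :: "'a set \<Rightarrow> ('a \<Rightarrow> 'a \<Rightarrow> bool) \<Rightarrow> 'a \<Rightarrow> 'a set" where
  "neighbours V E x = {y \<in> V. E x y}"

definition degree :: "'a set \<Rightarrow> ('a \<Rightarrow> 'a \<Rightarrow> bool) \<Rightarrow> 'a \<Rightarrow> nat" where
  "degree V E x = card (neighbours V E x)"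

lemma connected_graphI:
  assumes "simple_graph V E" "r \<in> V" "\<And>x. x \<in> V \<Longrightarrow> E\<^sup>*\<^sup>* r x"
  shows "connected_graph V E"
proof -
  have "symp E\<^sup>*\<^sup>*"
    using assms(1) by (intro symp_rtranclp sympI) (auto simp: simple_graph_def)
  then have "E\<^sup>*\<^sup>* x y" if "x \<in> V" "y \<in> V" for x y
    using assms(3) that by (meson rtranclp_trans sympD)
  then show ?thesis
    using assms(1,2) by (auto simp: connected_graph_def)
qed

lemma automorphism_in: "automorphism V E \<sigma> \<Longrightarrow> x \<in> V \<Longrightarrow> \<sigma> x \<in> V"
  unfolding automorphism_def by (meson bij_betw_apply)

lemma automorphism_image: "automorphism V E \<sigma> \<Longrightarrow> \<sigma> ` V = V"
  unfolding automorphism_def by (simp add: bij_betw_def)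

lemma automorphism_inj_on: "automorphism V E \<sigma> \<Longrightarrow> inj_on \<sigma> V"
  unfolding automorphism_def by (simp add: bij_betw_def)

lemma automorphism_edge_iff:
  "automorphism V E \<sigma> \<Longrightarrow> x \<in> V \<Longrightarrow> y \<in> V \<Longrightarrow> E (\<sigma> x) (\<sigma> y) \<longleftrightarrow> E x y"
  unfolding automorphism_def by auto

lemma automorphism_comp:
  assumes "automorphism V E \<sigma>" "automorphism V E \<tau>"
  shows "automorphism V E (\<tau> \<circ> \<sigma>)"
proof -
  have "bij_betw (\<tau> \<circ> \<sigma>) V V"
    using assms bij_betw_trans by (auto simp: automorphism_def)
  moreover have "E (\<tau> (\<sigma> x)) (\<tau> (\<sigma> y)) \<longleftrightarrow> E x y" if "x \<in> V" "y \<in> V" for x y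
    using assms that by (simp add: automorphism_edge_iff automorphism_in)
  ultimately show ?thesis
    by (simp add: automorphism_def)
qed

lemma automorphism_neighbours:
  assumes "automorphism V E \<sigma>" "x \<in> V"
  shows "neighbours V E (\<sigma> x) = \<sigma> ` neighbours V E x"
proof -
  have "neighbours V E (\<sigma> x) = {y \<in> \<sigma> ` V. E (\<sigma> x) y}"
    using automorphism_image[OF assms(1)] by (simp add: neighbours_def)
  also have "\<dots> = \<sigma> ` neighbours V E x"
    using assms by (auto simp: neighbours_def automorphism_edge_iff)
  finally show ?thesis .
qed

lemma automorphism_degree:
  assumes "automorphism V E \<sigma>" "x \<in> V"
  shows "degree V E (\<sigma> x) = degree V E x"
proof -
  have "inj_on \<sigma> (neighbours V E x)"
    using automorphism_inj_on[OF assms(1)] by (rule inj_on_subset) (auto simp: neighbours_def)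
  then show ?thesis
    using automorphism_neighbours[OF assms] by (simp add: degree_def card_image)
qed

lemma automorphism_fixes_distinguished_neighbour:
  assumes \<sigma>: "automorphism V E \<sigma>" and w: "w \<in> V" "\<sigma> w = w" and x: "x \<in> V" "E w x"
    and others: "\<And>y. y \<in> V \<Longrightarrow> E w y \<Longrightarrow> y \<noteq> x \<Longrightarrow> degree V E y = degree V E x \<Longrightarrow> \<sigma> y = y"
  shows "\<sigma> x = x"
proof (rule ccontr)
  assume moved: "\<sigma> x \<noteq> x"
  have "\<sigma> x \<in> V" "E w (\<sigma> x)"
    using automorphism_in[OF \<sigma> x(1)] automorphism_edge_iff[OF \<sigma> w(1) x(1)] w(2) x(2) by auto
  then have "\<sigma> (\<sigma> x) = \<sigma> x"
    using others moved automorphism_degree[OF \<sigma> x(1)] by simp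
  then show False
    using moved automorphism_inj_on[OF \<sigma>] \<open>\<sigma> x \<in> V\<close> x(1) by (auto dest: inj_onD)
qed

lemma transpose_twins_automorphism:
  assumes G: "simple_graph V E" and "a \<in> V" "b \<in> V" and twins: "\<And>z. E a z \<longleftrightarrow> E b z"
  shows "automorphism V E (transpose a b)"
proof -
  have sym: "E x y \<Longrightarrow> E y x" and irrefl: "\<not> E x x" for x y
    using G by (auto simp: simple_graph_def)
  have not_ab: "\<not> E a b" "\<not> E b a"
    using twins[of b] twins[of a] irrefl sym by blast+
  have swap_first: "E (transpose a b x) y \<longleftrightarrow> E x y" if "y \<noteq> a" "y \<noteq> b" for x y
    using twins[of y] by (auto simp: transpose_def)
  have "E (transpose a b x) (transpose a b y) \<longleftrightarrow> E x y" for x y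
  proof (cases "y = a \<or> y = b")
    case True
    show ?thesis
    proof (cases "x = a \<or> x = b")
      case True
      with \<open>y = a \<or> y = b\<close> show ?thesis
        using not_ab irrefl by (auto simp: transpose_def)
    next
      case False
      then have "E (transpose a b y) x \<longleftrightarrow> E y x"
        using False by (intro swap_first) auto
      with False show ?thesis
        by (auto simp: transpose_def dest: sym)
    qed
  qed (simp add: swap_first)
  then show ?thesis
    using assms(2,3) by (simp add: automorphism_def)
qed

lemma fixing_set_meets_twins:
  assumes S: "fixing_set V E S" and G: "simple_graph V E" and "a \<in> V" "b \<in> V" "a \<noteq> b"
    and twins: "\<And>z. E a z \<longleftrightarrow> E b z"
  shows "a \<in> S \<or> b \<in> S"
proof (rule ccontr)
  assume "\<not> (a \<in> S \<or> b \<in> S)"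
  then have "\<forall>x\<in>S. transpose a b x = x"
    by (metis transpose_apply_other)
  then have "\<forall>x\<in>V. transpose a b x = x"
    using S transpose_twins_automorphism[OF G assms(3,4) twins] unfolding fixing_set_def by blast
  with \<open>a \<in> V\<close> \<open>a \<noteq> b\<close> show False
    by auto
qed

lemma fixing_set_card_twins:
  assumes S: "fixing_set V E S" and G: "simple_graph V E" and T: "T \<subseteq> V"
    and twins: "\<And>a b z. a \<in> T \<Longrightarrow> b \<in> T \<Longrightarrow> E a z \<longleftrightarrow> E b z"
  shows "card T \<le> card S + 1"
proof -
  have "finite V"
    using G by (simp add: simple_graph_def)
  then have fin: "finite S" "finite T"
    using S T by (auto simp: fixing_set_def intro: finite_subset)
  have "\<forall>x\<in>T - S. \<forall>y\<in>T - S. x = y"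
    using fixing_set_meets_twins[OF S G] T twins by blast
  then have "card (T - S) \<le> 1"
    using card_le_Suc0_iff_eq[of "T - S"] fin by simp
  moreover have "card (T \<inter> S) \<le> card S"
    using fin by (simp add: card_mono)
  moreover have "card T = card (T \<inter> S) + card (T - S)"
    using fin(2) by (rule card_Int_Diff)
  ultimately show ?thesis
    by linarith
qed

lemma fixing_set_nonempty:
  assumes "fixing_set V E S" "automorphism V E \<sigma>" "x \<in> V" "\<sigma> x \<noteq> x"
  shows "S \<noteq> {}"
  using assms by (auto simp: fixing_set_def)

lemma fix_num_eqI:
  assumes "finite V" "fixing_set V E S" "card S = k" "\<And>S'. fixing_set V E S' \<Longrightarrow> k \<le> card S'"
  shows "fix_num V E = k"
  unfolding fix_num_def
proof (rule Min_eqI)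
  have "{S. fixing_set V E S} \<subseteq> Pow V"
    by (auto simp: fixing_set_def)
  then show "finite (card ` {S. fixing_set V E S})"
    using assms(1) by (meson finite_Pow_iff finite_imageI finite_subset)
qed (use assms(2-4) in auto)

definition mirror :: "'a + 'a \<Rightarrow> 'a + 'a" where
  "mirror = case_sum Inr Inl"

lemma mirror_simps [simp]: "mirror (Inl x) = Inr x" "mirror (Inr x) = Inl x"
  by (simp_all add: mirror_def)

lemma mirror_eq_iff: "mirror x = y \<longleftrightarrow> x = mirror y"
  by (cases x; cases y) simp_all

lemma functigraph_mirror_automorphism:
  assumes g: "\<And>x. x \<in> V \<Longrightarrow> g x \<in> V" "\<And>x. x \<in> V \<Longrightarrow> g (g x) = x"
  shows "automorphism (functigraph_vertices V) (functigraph_edges V E g) mirror"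
  unfolding automorphism_def
proof
  show "bij_betw mirror (functigraph_vertices V) (functigraph_vertices V)"
    by (rule bij_betw_byWitness[where f' = mirror])
      (auto simp: mirror_def functigraph_vertices_def split: sum.splits)
  have "x = g y \<longleftrightarrow> y = g x" if "x \<in> V" "y \<in> V" for x y
    using g(2) that by metis
  then show "\<forall>x\<in>functigraph_vertices V. \<forall>y\<in>functigraph_vertices V.
      functigraph_edges V E g x y = functigraph_edges V E g (mirror x) (mirror y)"
    by (auto simp: functigraph_vertices_def functigraph_edges_def mirror_def g)
qed

subsection \<open>The broom\<close>

text \<open>The path \<open>0 - 1 - \<dots> - (m+1)\<close> with the \<open>m\<close> leaves \<open>m+2, \<dots>, 2m+1\<close> attached to \<open>0\<close>.\<close>

definition broom_V :: "nat \<Rightarrow> nat set" where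
  "broom_V m = {..2*m+1}"

definition broom_E :: "nat \<Rightarrow> nat \<Rightarrow> nat \<Rightarrow> bool" where
  "broom_E m x y \<longleftrightarrow> x \<le> 2*m+1 \<and> y \<le> 2*m+1 \<and>
     ((x \<le> m+1 \<and> y \<le> m+1 \<and> (x = y+1 \<or> y = x+1)) \<or> (x = 0 \<and> y \<ge> m+2) \<or> (y = 0 \<and> x \<ge> m+2))"

lemma mem_broom_V: "x \<in> broom_V m \<longleftrightarrow> x \<le> 2*m+1"
  by (simp add: broom_V_def)

lemma broom_E_leaf: "m+2 \<le> x \<Longrightarrow> x \<le> 2*m+1 \<Longrightarrow> broom_E m x y \<longleftrightarrow> y = 0"
  by (auto simp: broom_E_def)

lemma broom_E_root: "broom_E m 0 y \<longleftrightarrow> y = 1 \<or> (m+2 \<le> y \<and> y \<le> 2*m+1)"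
  by (auto simp: broom_E_def)

lemma broom_E_path: "1 \<le> x \<Longrightarrow> x \<le> m \<Longrightarrow> broom_E m x y \<longleftrightarrow> y = x - 1 \<or> y = x + 1"
  by (auto simp: broom_E_def)

lemma simple_graph_broom: "simple_graph (broom_V m) (broom_E m)"
  by (auto simp: simple_graph_def broom_V_def broom_E_def)

lemma connected_graph_broom: "connected_graph (broom_V m) (broom_E m)"
proof (rule connected_graphI[OF simple_graph_broom, of 0])
  have path: "(broom_E m)\<^sup>*\<^sup>* 0 j" if "j \<le> m+1" for j
    using that
  proof (induction j)
    case (Suc j)
    then have "broom_E m j (Suc j)"
      by (auto simp: broom_E_def)
    with Suc show ?case
      by (meson Suc_leD rtranclp.rtrancl_into_rtrancl)
  qed simp
  show "(broom_E m)\<^sup>*\<^sup>* 0 x" if "x \<in> broom_V m" for x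
  proof (cases "x \<le> m+1")
    case False
    with that have "broom_E m 0 x"
      by (auto simp: broom_E_root mem_broom_V)
    then show ?thesis
      by blast
  qed (rule path)
qed (simp add: mem_broom_V)

lemma degree_broom_leaf: "m+2 \<le> x \<Longrightarrow> x \<le> 2*m+1 \<Longrightarrow> degree (broom_V m) (broom_E m) x = 1"
proof -
  assume "m+2 \<le> x" "x \<le> 2*m+1"
  then have "neighbours (broom_V m) (broom_E m) x = {0}"
    by (auto simp: neighbours_def mem_broom_V broom_E_leaf)
  then show ?thesis
    by (simp add: degree_def)
qed

lemma degree_broom_1: "1 \<le> m \<Longrightarrow> degree (broom_V m) (broom_E m) 1 = 2"
proof -
  assume "1 \<le> m"
  then have "neighbours (broom_V m) (broom_E m) 1 = {0, 2}"
    by (auto simp: neighbours_def mem_broom_V broom_E_def)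
  then show ?thesis
    by (simp add: degree_def)
qed

lemma broom_automorphism_fixes_path:
  assumes \<sigma>: "automorphism (broom_V m) (broom_E m) \<sigma>" and fixed: "\<sigma> 0 = 0" "\<sigma> 1 = 1"
    and "j \<le> m+1"
  shows "\<sigma> j = j"
proof -
  have "\<sigma> i = i \<and> \<sigma> (Suc i) = Suc i" if "i \<le> m" for i
    using that
  proof (induction i)
    case (Suc i)
    then have fixed_i: "\<sigma> i = i" "\<sigma> (Suc i) = Suc i"
      by simp_all
    have nbrs: "broom_E m (Suc i) y \<longleftrightarrow> y = i \<or> y = Suc (Suc i)" for y
      using Suc.prems broom_E_path[of "Suc i" m y] by simp
    have "\<sigma> (Suc (Suc i)) = Suc (Suc i)"
      by (rule automorphism_fixes_distinguished_neighbour[OF \<sigma>, of "Suc i"])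
        (use Suc.prems fixed_i nbrs in \<open>auto simp: mem_broom_V\<close>)
    with fixed_i show ?case
      by simp
  qed (use fixed in \<open>simp add: One_nat_def\<close>)
  then show ?thesis
    using \<open>j \<le> m+1\<close> by (cases j) auto
qed

lemma broom_fixing_set:
  assumes m: "2 \<le> m"
  shows "fixing_set (broom_V m) (broom_E m) {m+2..2*m}"
  unfolding fixing_set_def
proof (intro conjI allI impI)
  show "{m+2..2*m} \<subseteq> broom_V m"
    by (auto simp: mem_broom_V)
  fix \<sigma>
  assume "automorphism (broom_V m) (broom_E m) \<sigma> \<and> (\<forall>x\<in>{m+2..2*m}. \<sigma> x = x)"
  then have \<sigma>: "automorphism (broom_V m) (broom_E m) \<sigma>"
    and leaves: "\<And>x. m+2 \<le> x \<Longrightarrow> x \<le> 2*m \<Longrightarrow> \<sigma> x = x"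
    by auto
  have root: "\<sigma> 0 = 0"
    by (rule automorphism_fixes_distinguished_neighbour[OF \<sigma>, of "m+2"])
      (use m leaves in \<open>auto simp: mem_broom_V broom_E_leaf\<close>)
  have one: "\<sigma> 1 = 1"
  proof (rule automorphism_fixes_distinguished_neighbour[OF \<sigma> _ root])
    show "\<sigma> y = y" if "y \<in> broom_V m" "broom_E m 0 y" "y \<noteq> 1"
      "degree (broom_V m) (broom_E m) y = degree (broom_V m) (broom_E m) 1" for y
      using that degree_broom_leaf[of m y] degree_broom_1[of m] m by (simp add: broom_E_root)
  qed (use m in \<open>auto simp: mem_broom_V broom_E_root\<close>)
  have last: "\<sigma> (2*m+1) = 2*m+1"
  proof (rule automorphism_fixes_distinguished_neighbour[OF \<sigma> _ root])
    show "\<sigma> y = y" if "broom_E m 0 y" "y \<noteq> 2*m+1" for y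
      using that one leaves by (auto simp: broom_E_root)
  qed (auto simp: mem_broom_V broom_E_root)
  show "\<forall>x\<in>broom_V m. \<sigma> x = x"
  proof
    fix x
    assume "x \<in> broom_V m"
    then consider "x \<le> m+1" | "m+2 \<le> x" "x \<le> 2*m" | "x = 2*m+1"
      by (fastforce simp: mem_broom_V)
    then show "\<sigma> x = x"
    proof cases
      case 1
      then show ?thesis
        by (rule broom_automorphism_fixes_path[OF \<sigma> root one])
    next
      case 2
      then show ?thesis
        by (rule leaves)
    next
      case 3
      then show ?thesis
        using last by simp
    qed
  qed
qed

lemma broom_fixing_set_card:
  assumes "fixing_set (broom_V m) (broom_E m) S"
  shows "m - 1 \<le> card S"
proof -
  have "card {m+2..2*m+1} \<le> card S + 1"
    by (rule fixing_set_card_twins[OF assms simple_graph_broom])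
      (auto simp: mem_broom_V broom_E_leaf)
  then show ?thesis
    by simp
qed

lemma fix_num_broom:
  assumes "2 \<le> m"
  shows "fix_num (broom_V m) (broom_E m) = m - 1"
proof (rule fix_num_eqI[OF _ broom_fixing_set[OF assms]])
  show "finite (broom_V m)"
    by (simp add: broom_V_def)
qed (auto dest: broom_fixing_set_card)

subsection \<open>The functigraph of the broom\<close>

definition broom_pairing :: "nat \<Rightarrow> nat \<Rightarrow> nat" where
  "broom_pairing m x =
     (if 1 \<le> x \<and> x \<le> m then x+m+1 else if m+2 \<le> x \<and> x \<le> 2*m+1 then x-(m+1) else x)"

lemma broom_pairing_in: "x \<in> broom_V m \<Longrightarrow> broom_pairing m x \<in> broom_V m"
  by (auto simp: broom_pairing_def mem_broom_V)

lemma broom_pairing_involution: "x \<in> broom_V m \<Longrightarrow> broom_pairing m (broom_pairing m x) = x"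
  by (auto simp: broom_pairing_def mem_broom_V)

abbreviation FV :: "nat \<Rightarrow> (nat + nat) set" where
  "FV m \<equiv> functigraph_vertices (broom_V m)"

abbreviation FE :: "nat \<Rightarrow> nat + nat \<Rightarrow> nat + nat \<Rightarrow> bool" where
  "FE m \<equiv> functigraph_edges (broom_V m) (broom_E m) (broom_pairing m)"

lemma finite_FV: "finite (FV m)"
  by (simp add: functigraph_vertices_def broom_V_def)

lemma mem_FV: "Inl a \<in> FV m \<longleftrightarrow> a \<le> 2*m+1" "Inr a \<in> FV m \<longleftrightarrow> a \<le> 2*m+1"
  by (auto simp: functigraph_vertices_def mem_broom_V)

lemma FE_simps:
  "FE m (Inl a) (Inl b) \<longleftrightarrow> broom_E m a b"
  "FE m (Inr a) (Inr b) \<longleftrightarrow> broom_E m a b"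
  "FE m (Inl a) (Inr b) \<longleftrightarrow> a \<in> broom_V m \<and> b = broom_pairing m a"
  "FE m (Inr a) (Inl b) \<longleftrightarrow> b \<in> broom_V m \<and> a = broom_pairing m b"
  by (auto simp: functigraph_edges_def)

lemma FE_Inl_path:
  "1 \<le> j \<Longrightarrow> j \<le> m \<Longrightarrow> FE m (Inl j) y \<longleftrightarrow> y = Inl (j-1) \<or> y = Inl (j+1) \<or> y = Inr (j+m+1)"
  by (cases y) (auto simp: FE_simps broom_E_def broom_pairing_def mem_broom_V)

lemma FE_Inl_end: "FE m (Inl (Suc m)) y \<longleftrightarrow> y = Inl m \<or> y = Inr (Suc m)"
  by (cases y) (auto simp: FE_simps broom_E_def broom_pairing_def mem_broom_V)

lemma FE_Inr_end: "FE m (Inr (Suc m)) y \<longleftrightarrow> y = Inr m \<or> y = Inl (Suc m)"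
  by (cases y) (auto simp: FE_simps broom_E_def broom_pairing_def mem_broom_V)

lemma FE_Inr_leaf:
  "m+2 \<le> x \<Longrightarrow> x \<le> 2*m+1 \<Longrightarrow> FE m (Inr x) y \<longleftrightarrow> y = Inr 0 \<or> y = Inl (x-(m+1))"
  by (cases y) (auto simp: FE_simps broom_E_def broom_pairing_def mem_broom_V)

lemma degree_FE_Inr_tail:
  assumes "m+1 \<le> x" "x \<le> 2*m+1"
  shows "degree (FV m) (FE m) (Inr x) = 2"
proof -
  obtain a b where "neighbours (FV m) (FE m) (Inr x) = {a, b}" "a \<noteq> b"
  proof (cases "x = m+1")
    case True
    then show ?thesis
      by (intro that[of "Inr m" "Inl (m+1)"]) (auto simp: neighbours_def mem_FV FE_Inr_end)
  next
    case False
    then show ?thesis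
      using assms
      by (intro that[of "Inr 0" "Inl (x-(m+1))"]) (auto simp: neighbours_def mem_FV FE_Inr_leaf)
  qed
  then show ?thesis
    by (simp add: degree_def)
qed

lemma degree_FE_Inl_path:
  assumes "j \<le> m" "1 \<le> m"
  shows "3 \<le> degree (FV m) (FE m) (Inl j)"
proof -
  obtain a b c where abc: "{a, b, c} \<subseteq> neighbours (FV m) (FE m) (Inl j)" "card {a, b, c} = 3"
  proof (cases "j = 0")
    case True
    then show ?thesis
      using assms by (intro that[of "Inl 1" "Inr 0" "Inl (m+2)"])
        (auto simp: neighbours_def mem_FV FE_simps broom_E_def broom_pairing_def mem_broom_V)
  next
    case False
    then show ?thesis
      using assms by (intro that[of "Inl (j-1)" "Inl (j+1)" "Inr (j+m+1)"])
        (auto simp: neighbours_def mem_FV FE_simps broom_E_def broom_pairing_def mem_broom_V)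
  qed
  have "finite (neighbours (FV m) (FE m) (Inl j))"
    using finite_FV by (simp add: neighbours_def)
  with abc show ?thesis
    unfolding degree_def by (metis card_mono)
qed

lemma broom_fg_automorphism_fixes_left_path:
  assumes \<sigma>: "automorphism (FV m) (FE m) \<sigma>" and m: "1 \<le> m"
    and end_fixed: "\<sigma> (Inl (m+1)) = Inl (m+1)" and "j \<le> m+1"
  shows "\<sigma> (Inl j) = Inl j"
proof -
  have "\<sigma> (Inl n) = Inl n \<and> \<sigma> (Inl (Suc n)) = Inl (Suc n)" if "n \<le> m" for n
    using that
  proof (induction rule: inc_induct)
    case base
    have "\<sigma> (Inl m) = Inl m"
    proof (rule automorphism_fixes_distinguished_neighbour[OF \<sigma> _ end_fixed])
      show "\<sigma> y = y" if "FE m (Inl (m+1)) y" "y \<noteq> Inl m"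
        "degree (FV m) (FE m) y = degree (FV m) (FE m) (Inl m)" for y
        using that degree_FE_Inr_tail[of m "m+1"] degree_FE_Inl_path[of m m] m
        by (auto simp: FE_Inl_end)
    qed (auto simp: mem_FV FE_Inl_end)
    with end_fixed show ?case
      by simp
  next
    case (step k)
    then have fixed: "\<sigma> (Inl (Suc k)) = Inl (Suc k)" "\<sigma> (Inl (Suc (Suc k))) = Inl (Suc (Suc k))"
      by simp_all
    have nbrs: "FE m (Inl (Suc k)) y \<longleftrightarrow> y = Inl k \<or> y = Inl (Suc (Suc k)) \<or> y = Inr (k+m+2)" for y
      using FE_Inl_path[of "Suc k" m y] step.hyps by simp
    have "\<sigma> (Inl k) = Inl k"
    proof (rule automorphism_fixes_distinguished_neighbour[OF \<sigma> _ fixed(1)])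
      show "\<sigma> y = y" if "FE m (Inl (Suc k)) y" "y \<noteq> Inl k"
        "degree (FV m) (FE m) y = degree (FV m) (FE m) (Inl k)" for y
        using that fixed degree_FE_Inr_tail[of m "k+m+2"] degree_FE_Inl_path[of k m] m step.hyps
        by (auto simp: nbrs)
    qed (use step.hyps in \<open>auto simp: mem_FV nbrs\<close>)
    with fixed show ?case
      by simp
  qed
  then show ?thesis
    using \<open>j \<le> m+1\<close> by (cases "j = m+1") auto
qed

lemma broom_fg_automorphism_fixes_right_tail:
  assumes \<sigma>: "automorphism (FV m) (FE m) \<sigma>"
    and left: "\<And>j. j \<le> m+1 \<Longrightarrow> \<sigma> (Inl j) = Inl j" and x: "m+1 \<le> x" "x \<le> 2*m+1"
  shows "\<sigma> (Inr x) = Inr x"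
proof (cases "x = m+1")
  case True
  show ?thesis
    by (rule automorphism_fixes_distinguished_neighbour[OF \<sigma> _ left[of "m+1"]])
      (use True left in \<open>auto simp: mem_FV FE_Inl_end\<close>)
next
  case False
  define j where "j = x - (m+1)"
  have j: "1 \<le> j" "j \<le> m" "x = j+m+1"
    using False x by (auto simp: j_def)
  show ?thesis
    by (rule automorphism_fixes_distinguished_neighbour[OF \<sigma> _ left[of j]])
      (use j left in \<open>auto simp: mem_FV FE_Inl_path\<close>)
qed

lemma broom_fg_mirror_automorphism: "automorphism (FV m) (FE m) mirror"
  by (rule functigraph_mirror_automorphism) (simp_all add: broom_pairing_in broom_pairing_involution)

text \<open>Fixing \<open>Inl (m+1)\<close> pins down the copy \<open>Inl\<close> of the path and, through the pairing edges, the
  remaining vertices \<open>Inr x\<close>, \<open>x \<ge> m+1\<close>. In particular \<open>Inr (m+1)\<close> is fixed, so the argument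
  applies again to the automorphism conjugated by \<open>mirror\<close>, which pins down the other half.\<close>
lemma broom_fg_fixing_set:
  assumes m: "1 \<le> m"
  shows "fixing_set (FV m) (FE m) {Inl (m+1)}"
  unfolding fixing_set_def
proof (intro conjI allI impI)
  show "{Inl (m+1)} \<subseteq> FV m"
    by (simp add: mem_FV)
  fix \<sigma>
  assume "automorphism (FV m) (FE m) \<sigma> \<and> (\<forall>x\<in>{Inl (m+1)}. \<sigma> x = x)"
  then have \<sigma>: "automorphism (FV m) (FE m) \<sigma>" and end_fixed: "\<sigma> (Inl (m+1)) = Inl (m+1)"
    by auto
  define \<tau> where "\<tau> = mirror \<circ> \<sigma> \<circ> mirror"
  have \<tau>: "automorphism (FV m) (FE m) \<tau>"
    unfolding \<tau>_def by (intro automorphism_comp \<sigma> broom_fg_mirror_automorphism)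
  have mirror_conj:
      "\<tau> (Inl a) = Inl a \<longleftrightarrow> \<sigma> (Inr a) = Inr a" "\<tau> (Inr a) = Inr a \<longleftrightarrow> \<sigma> (Inl a) = Inl a" for a
    by (simp_all add: \<tau>_def mirror_eq_iff)
  have left: "\<sigma> (Inl j) = Inl j" if "j \<le> m+1" for j
    using broom_fg_automorphism_fixes_left_path[OF \<sigma> m end_fixed that] .
  have right_tail: "\<sigma> (Inr x) = Inr x" if "m+1 \<le> x" "x \<le> 2*m+1" for x
    using broom_fg_automorphism_fixes_right_tail[OF \<sigma> left that] .
  have right: "\<sigma> (Inr j) = Inr j" if "j \<le> m+1" for j
    using broom_fg_automorphism_fixes_left_path[OF \<tau> m _ that] right_tail[of "m+1"] mirror_conj by simp
  have left_tail: "\<sigma> (Inl x) = Inl x" if "m+1 \<le> x" "x \<le> 2*m+1" for x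
    using broom_fg_automorphism_fixes_right_tail[OF \<tau> _ that] right mirror_conj by simp
  show "\<forall>x\<in>FV m. \<sigma> x = x"
  proof
    fix x
    assume "x \<in> FV m"
    then obtain a where "x = Inl a \<or> x = Inr a" "a \<le> 2*m+1"
      by (auto simp: functigraph_vertices_def mem_broom_V)
    then show "\<sigma> x = x"
      using left right left_tail right_tail by (cases "a \<le> m+1") auto
  qed
qed

lemma fix_num_broom_fg:
  assumes "1 \<le> m"
  shows "fix_num (FV m) (FE m) = 1"
proof (rule fix_num_eqI[OF finite_FV broom_fg_fixing_set[OF assms]])
  fix S
  assume S: "fixing_set (FV m) (FE m) S"
  then have "finite S"
    using finite_FV finite_subset by (auto simp: fixing_set_def)
  moreover have "S \<noteq> {}"
    by (rule fixing_set_nonempty[OF S broom_fg_mirror_automorphism, of "Inl 0"]) (simp_all add: mem_FV)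
  ultimately show "1 \<le> card S"
    by (simp add: Suc_leI card_gt_0_iff)
qed simp

theorem lemma2p9:
  fixes t :: nat
  assumes "t \<ge> 2"
  shows "\<exists>(V :: nat set) E g. connected_graph V E \<and> g \<in> V \<rightarrow> V \<and>
    int (fix_num V E) - int (fix_num (functigraph_vertices V) (functigraph_edges V E g)) = int t"
proof (intro exI conjI)
  let ?m = "t + 2"
  show "connected_graph (broom_V ?m) (broom_E ?m)"
    by (rule connected_graph_broom)
  show "broom_pairing ?m \<in> broom_V ?m \<rightarrow> broom_V ?m"
    using broom_pairing_in by blast
  show "int (fix_num (broom_V ?m) (broom_E ?m)) - int (fix_num (FV ?m) (FE ?m)) = int t"
    using fix_num_broom[of ?m] fix_num_broom_fg[of ?m] by simp
qed

end
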